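(* For every regular language $L\subseteq\Sigma^*$, the nondeterministic syntactic complexity $\mathrm{nsyn}(L)$ equals the least number of states of any subatomic nfa accepting $L$.
   Context: $\mathrm{LQ}(L)$ is the finite semilattice (under $\subseteq$) of all finite unions, including $\emptyset$, of left derivatives $u^{-1}L=\{w:uw\in L\}$. The syntactic monoid $\mathrm{Syn}(L)$ is $\Sigma^*$ modulo $v\equiv_L w\iff\forall x,y\,(xvy\in L\Leftrightarrow xwy\in L)$, with classes $[w]_L$. For a finite semilattice $S$, $\mathbf{JSL}(S,S)$ is the monoid of join-preserving maps $S\to S$ with $f\cdot g:=g\circ f$. A boolean representation of a monoid $M$ is a finite semilattice $S$ with a monoid morphism $\rho\colon M\to\mathbf{JSL}(S,S)$; its degree is $|J(S)|$, the number of join-irreducible elements of $S$. $\rho_2$ extends $\rho_1$ if there is an injective join-preserving $f\colon S_1\to S_2$ with $f(\rho_1(m)(s))=\rho_2(m)(f(s))$ for all $m\in M$, $s\in S_1$. The canonical representation is $\kappa_L\colon\mathrm{Syn}(L)\to\mathbf{JSL}(\mathrm{LQ}(L),\mathrm{LQ}(L))$, $[w]_L\mapsto(K\mapsto w^{-1}K)$. $\mathrm{nsyn}(L)$ is the least degree of a boolean representation of $\mathrm{Syn}(L)$ extending $\kappa_L$. An nfa (finite states, transition relations, sets of initial and final states) accepting $L$ is subatomic if every state accepts a language in the boolean subalgebra of $\mathcal{P}(\Sigma^* )$ generated by all two-sided derivatives $u^{-1}Lv^{-1}=\{w:uwv\in L\}$. *)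

theory Defs
  imports Main
begin

definition lder :: "'a list \<Rightarrow> 'a list set \<Rightarrow> 'a list set" where
  "lder u L = {w. u @ w \<in> L}"

definition tsder :: "'a list \<Rightarrow> 'a list set \<Rightarrow> 'a list \<Rightarrow> 'a list set" where
  "tsder u L v = {w. u @ w @ v \<in> L}"

definition LQ :: "'a list set \<Rightarrow> 'a list set set" where
  "LQ L = {\<Union>D | D. finite D \<and> D \<subseteq> range (\<lambda>u. lder u L)}"

definition syn_eq :: "'a list set \<Rightarrow> 'a list \<Rightarrow> 'a list \<Rightarrow> bool" where
  "syn_eq L v w \<longleftrightarrow> (\<forall>x y. x @ v @ y \<in> L \<longleftrightarrow> x @ w @ y \<in> L)"

definition syn_class :: "'a list set \<Rightarrow> 'a list \<Rightarrow> 'a list set" where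
  "syn_class L w = {v. syn_eq L v w}"

text \<open>Elements of Syn(L) are the classes syn_class L w; multiplication is
  [v][w] = [v @ w], the unit is [[]].\<close>

definition finite_jsl :: "nat set \<Rightarrow> (nat \<Rightarrow> nat \<Rightarrow> nat) \<Rightarrow> nat \<Rightarrow> bool" where
  "finite_jsl S j b \<longleftrightarrow> finite S \<and> b \<in> S \<and>
     (\<forall>x\<in>S. \<forall>y\<in>S. j x y \<in> S) \<and>
     (\<forall>x\<in>S. \<forall>y\<in>S. \<forall>z\<in>S. j (j x y) z = j x (j y z)) \<and>
     (\<forall>x\<in>S. \<forall>y\<in>S. j x y = j y x) \<and>
     (\<forall>x\<in>S. j x x = x) \<and>
     (\<forall>x\<in>S. j b x = x)"

definition jsl_endo :: "nat set \<Rightarrow> (nat \<Rightarrow> nat \<Rightarrow> nat) \<Rightarrow> nat \<Rightarrow> (nat \<Rightarrow> nat) \<Rightarrow> bool" where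
  "jsl_endo S j b f \<longleftrightarrow> (\<forall>x\<in>S. f x \<in> S) \<and> f b = b \<and>
     (\<forall>x\<in>S. \<forall>y\<in>S. f (j x y) = j (f x) (f y))"

definition join_irr :: "nat set \<Rightarrow> (nat \<Rightarrow> nat \<Rightarrow> nat) \<Rightarrow> nat \<Rightarrow> nat set" where
  "join_irr S j b = {x \<in> S. x \<noteq> b \<and> (\<forall>y\<in>S. \<forall>z\<in>S. x = j y z \<longrightarrow> x = y \<or> x = z)}"

text \<open>A boolean representation of Syn(L): a finite JSL S together with a monoid morphism
  rho : Syn(L) \<rightarrow> JSL(S,S), where JSL(S,S) has multiplication f\<cdot>g = g \<circ> f.\<close>
definition bool_rep ::
  "'a list set \<Rightarrow> nat set \<Rightarrow> (nat \<Rightarrow> nat \<Rightarrow> nat) \<Rightarrow> nat \<Rightarrow> ('a list set \<Rightarrow> nat \<Rightarrow> nat) \<Rightarrow> bool" where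
  "bool_rep L S j b \<rho> \<longleftrightarrow> finite_jsl S j b \<and>
     (\<forall>w. jsl_endo S j b (\<rho> (syn_class L w))) \<and>
     (\<forall>x\<in>S. \<rho> (syn_class L []) x = x) \<and>
     (\<forall>v w. \<forall>x\<in>S. \<rho> (syn_class L (v @ w)) x = \<rho> (syn_class L w) (\<rho> (syn_class L v) x))"

text \<open>rho extends the canonical representation kappa_L ([w] \<mapsto> (K \<mapsto> w^{-1} K)) on LQ(L)
  (a JSL under union with bottom the empty set).\<close>
definition extends_canonical ::
  "'a list set \<Rightarrow> nat set \<Rightarrow> (nat \<Rightarrow> nat \<Rightarrow> nat) \<Rightarrow> nat \<Rightarrow> ('a list set \<Rightarrow> nat \<Rightarrow> nat) \<Rightarrow> bool" where
  "extends_canonical L S j b \<rho> \<longleftrightarrow>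
     (\<exists>f :: 'a list set \<Rightarrow> nat.
        inj_on f (LQ L) \<and> (\<forall>K\<in>LQ L. f K \<in> S) \<and> f {} = b \<and>
        (\<forall>K\<in>LQ L. \<forall>K'\<in>LQ L. f (K \<union> K') = j (f K) (f K')) \<and>
        (\<forall>w. \<forall>K\<in>LQ L. f (lder w K) = \<rho> (syn_class L w) (f K)))"

definition nsyn :: "'a list set \<Rightarrow> nat" where
  "nsyn L = (LEAST n. \<exists>S j b \<rho>. bool_rep L S j b \<rho> \<and> extends_canonical L S j b \<rho>
                          \<and> card (join_irr S j b) = n)"

record 'a nfa =
  states :: "nat set"
  trans :: "nat \<Rightarrow> 'a \<Rightarrow> nat set"
  init :: "nat set"
  final :: "nat set"

definition wf_nfa :: "'a nfa \<Rightarrow> bool" where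
  "wf_nfa A \<longleftrightarrow> finite (states A) \<and> init A \<subseteq> states A \<and> final A \<subseteq> states A \<and>
     (\<forall>q\<in>states A. \<forall>a. trans A q a \<subseteq> states A)"

fun reach :: "'a nfa \<Rightarrow> nat \<Rightarrow> 'a list \<Rightarrow> nat set" where
  "reach A q [] = {q}"
| "reach A q (a # w) = (\<Union>p\<in>trans A q a. reach A p w)"

definition state_lang :: "'a nfa \<Rightarrow> nat \<Rightarrow> 'a list set" where
  "state_lang A q = {w. reach A q w \<inter> final A \<noteq> {}}"

definition nfa_lang :: "'a nfa \<Rightarrow> 'a list set" where
  "nfa_lang A = (\<Union>q\<in>init A. state_lang A q)"

definition regular :: "'a list set \<Rightarrow> bool" where
  "regular L \<longleftrightarrow> (\<exists>A. wf_nfa A \<and> nfa_lang A = L)"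

inductive_set bool_gen :: "'b set set \<Rightarrow> 'b set set" for G where
  gen: "X \<in> G \<Longrightarrow> X \<in> bool_gen G"
| empty: "{} \<in> bool_gen G"
| compl: "X \<in> bool_gen G \<Longrightarrow> - X \<in> bool_gen G"
| union: "X \<in> bool_gen G \<Longrightarrow> Y \<in> bool_gen G \<Longrightarrow> X \<union> Y \<in> bool_gen G"

definition subatomic :: "'a nfa \<Rightarrow> bool" where
  "subatomic A \<longleftrightarrow> (\<forall>q\<in>states A.
     state_lang A q \<in> bool_gen {tsder u (nfa_lang A) v | u v. True})"

end

(* Given a representation rho of Syn(L) extending the canonical one on a finite semilattice S,
   take the join-irreducibles of S as states: z is initial iff z <= L, z goes to z' on a iff
   z' <= rho(a)(z), and z is final iff z is not below K0, the largest element of LQ(L) that does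
   not contain the empty word. Since every element of S is the join of the join-irreducibles
   below it, state z accepts {w. rho(w)(z) is not below K0}; this language only depends on
   syntactic classes, so it is a boolean combination of the finitely many two-sided
   derivatives, and the automaton accepts the w with [] in w^-1 L, i.e. L.
   Conversely, the state languages of a subatomic nfa are unions of syntactic classes, so the
   unions of state languages form a finite semilattice that contains LQ(L), is closed under
   left derivatives and carries an action of Syn(L) by w^-1; its join-irreducibles are state
   languages, whence there are at most as many as states. *)

theory Submission
  imports Defs
begin

lemma reach_append: "reach A q (u @ w) = (\<Union>p\<in>reach A q u. reach A p w)"
  by (induction u arbitrary: q) auto

lemma reach_subset_states: "wf_nfa A \<Longrightarrow> q \<in> states A \<Longrightarrow> reach A q w \<subseteq> states A"
  by (induction w arbitrary: q) (auto simp: wf_nfa_def, blast)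

lemma append_in_state_lang_iff:
  "u @ w \<in> state_lang A q \<longleftrightarrow> (\<exists>p\<in>reach A q u. w \<in> state_lang A p)"
  by (auto simp: state_lang_def reach_append)

lemma lder_Un: "lder w (X \<union> Y) = lder w X \<union> lder w Y"
  by (auto simp: lder_def)

lemma lder_Union_state_lang:
  "lder u (\<Union>(state_lang A ` X)) = \<Union>(state_lang A ` (\<Union>q\<in>X. reach A q u))"
  by (auto simp: lder_def append_in_state_lang_iff)

lemma regular_finite_tsder:
  assumes "regular L"
  shows "finite {tsder u L v | u v. True}"
proof -
  obtain A where A: "wf_nfa A" "nfa_lang A = L"
    using assms unfolding regular_def by blast
  \<comment> \<open>u^-1 L v^-1 only depends on the states reached by u and the states accepting v\<close>
  define between where
    "between P R = {w. \<exists>p\<in>P. \<exists>r\<in>reach A p w. r \<in> R}" for P R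
  have "tsder u L v = between (\<Union>q\<in>init A. reach A q u) (states A \<inter> {r. v \<in> state_lang A r})"
    for u v
  proof -
    have "tsder u L v = between (\<Union>q\<in>init A. reach A q u) {r. v \<in> state_lang A r}"
      unfolding tsder_def between_def A(2)[symmetric] nfa_lang_def
      by (auto simp: append_in_state_lang_iff)
    also have "\<dots> = between (\<Union>q\<in>init A. reach A q u) (states A \<inter> {r. v \<in> state_lang A r})"
      using A(1) reach_subset_states[OF A(1)] unfolding between_def wf_nfa_def by blast
    finally show ?thesis .
  qed
  moreover have "(\<Union>q\<in>init A. reach A q u) \<subseteq> states A" for u
    using A(1) reach_subset_states[OF A(1)] by (auto simp: wf_nfa_def)
  ultimately have "{tsder u L v | u v. True} \<subseteq> case_prod between ` (Pow (states A) \<times> Pow (states A))"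
    by fastforce
  then show ?thesis
    by (rule finite_subset) (use A(1) in \<open>simp add: wf_nfa_def\<close>)
qed

lemma lder_in_LQ: "lder u L \<in> LQ L"
  unfolding LQ_def by (intro CollectI exI[of _ "{lder u L}"]) auto

lemma self_in_LQ: "L \<in> LQ L"
  using lder_in_LQ[of "[]" L] by (simp add: lder_def)

lemma LQ_Un: "K \<in> LQ L \<Longrightarrow> K' \<in> LQ L \<Longrightarrow> K \<union> K' \<in> LQ L"
proof -
  assume "K \<in> LQ L" "K' \<in> LQ L"
  then obtain D D' where "K = \<Union>D" "finite D" "D \<subseteq> range (\<lambda>u. lder u L)"
    "K' = \<Union>D'" "finite D'" "D' \<subseteq> range (\<lambda>u. lder u L)"
    unfolding LQ_def by blast
  then show ?thesis
    unfolding LQ_def by (intro CollectI exI[of _ "D \<union> D'"]) auto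
qed

definition rejecting_part :: "'a list set \<Rightarrow> 'a list set" where
  "rejecting_part L = \<Union>{K \<in> range (\<lambda>u. lder u L). [] \<notin> K}"

lemma rejecting_part_in_LQ: "finite (LQ L) \<Longrightarrow> rejecting_part L \<in> LQ L"
proof -
  assume "finite (LQ L)"
  then have "finite (range (\<lambda>u. lder u L))"
    by (rule finite_subset[rotated]) (auto intro: lder_in_LQ)
  then show ?thesis
    unfolding LQ_def rejecting_part_def
    by (intro CollectI exI[of _ "{K \<in> range (\<lambda>u. lder u L). [] \<notin> K}"]) auto
qed

lemma Nil_in_LQ_iff: "K \<in> LQ L \<Longrightarrow> [] \<in> K \<longleftrightarrow> \<not> K \<subseteq> rejecting_part L"
  unfolding LQ_def rejecting_part_def by blast

lemma bool_gen_Int: "X \<in> bool_gen G \<Longrightarrow> Y \<in> bool_gen G \<Longrightarrow> X \<inter> Y \<in> bool_gen G"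
  using bool_gen.compl[OF bool_gen.union[OF bool_gen.compl bool_gen.compl]] by auto

lemma bool_gen_Inter: "finite F \<Longrightarrow> F \<subseteq> bool_gen G \<Longrightarrow> \<Inter>F \<in> bool_gen G"
  by (induction F rule: finite_induct)
    (auto intro: bool_gen_Int bool_gen.compl[OF bool_gen.empty, simplified])

lemma bool_gen_Union: "finite F \<Longrightarrow> F \<subseteq> bool_gen G \<Longrightarrow> \<Union>F \<in> bool_gen G"
  by (induction F rule: finite_induct) (auto intro: bool_gen.intros)

definition syn_saturated :: "'a list set \<Rightarrow> 'a list set \<Rightarrow> bool" where
  "syn_saturated L X \<longleftrightarrow> (\<forall>w w'. w \<in> X \<longrightarrow> syn_eq L w w' \<longrightarrow> w' \<in> X)"

lemma syn_eq_sym: "syn_eq L w w' \<Longrightarrow> syn_eq L w' w"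
  by (auto simp: syn_eq_def)

lemma syn_eq_append_right: "syn_eq L w w' \<Longrightarrow> syn_eq L (w @ x) (w' @ x)"
  unfolding syn_eq_def by (metis append.assoc)

lemma syn_class_eq: "syn_eq L w w' \<Longrightarrow> syn_class L w = syn_class L w'"
  by (auto simp: syn_class_def syn_eq_def)

lemma syn_saturated_Union: "\<forall>X\<in>D. syn_saturated L X \<Longrightarrow> syn_saturated L (\<Union>D)"
  unfolding syn_saturated_def by blast

lemma syn_saturated_if_bool_gen:
  "X \<in> bool_gen {tsder u L v | u v. True} \<Longrightarrow> syn_saturated L X"
proof (induction rule: bool_gen.induct)
  case (gen X)
  then show ?case
    by (auto simp: syn_saturated_def tsder_def syn_eq_def)
qed (auto simp: syn_saturated_def dest: syn_eq_sym)

text \<open>A saturated set is the union of the syntactic classes it meets, and each class is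
  the intersection of the (finitely many) two-sided derivatives containing it and the
  complements of the others.\<close>
lemma bool_gen_if_syn_saturated:
  assumes fin: "finite {tsder u L v | u v. True}" and sat: "syn_saturated L X"
  shows "X \<in> bool_gen {tsder u L v | u v. True}"
proof -
  define T where "T = {tsder u L v | u v. True}"
  define atom where "atom w = \<Inter>((\<lambda>t. if w \<in> t then t else - t) ` T)" for w
  have atom_iff: "w' \<in> atom w \<longleftrightarrow> syn_eq L w' w" for w w'
  proof -
    have "w' \<in> atom w \<longleftrightarrow> (\<forall>t\<in>T. w' \<in> t \<longleftrightarrow> w \<in> t)"
      by (auto simp: atom_def split: if_splits)
    also have "\<dots> \<longleftrightarrow> (\<forall>u v. w' \<in> tsder u L v \<longleftrightarrow> w \<in> tsder u L v)"
      unfolding T_def by blast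
    also have "\<dots> \<longleftrightarrow> syn_eq L w' w"
      by (simp add: tsder_def syn_eq_def)
    finally show ?thesis .
  qed
  have atom_in: "atom w \<in> bool_gen T" for w
    unfolding atom_def using fin unfolding T_def[symmetric]
    by (intro bool_gen_Inter) (auto intro: bool_gen.intros)
  have "X = \<Union>(atom ` X)"
    using sat atom_iff unfolding syn_saturated_def by (auto simp: syn_eq_def dest: syn_eq_sym)
  also have "\<dots> \<in> bool_gen T"
  proof (rule bool_gen_Union)
    have "atom ` X \<subseteq> (\<lambda>U. \<Inter>((\<lambda>t. if t \<in> U then t else - t) ` T)) ` Pow T"
      unfolding atom_def by (auto intro!: image_eqI[where x = "{t \<in> T. _ \<in> t}"])
    then show "finite (atom ` X)"
      using fin unfolding T_def[symmetric] by (simp add: finite_subset)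
  qed (use atom_in in auto)
  finally show ?thesis
    unfolding T_def .
qed

lemma subatomic_iff_syn_saturated:
  assumes "wf_nfa A"
  shows "subatomic A \<longleftrightarrow> (\<forall>q\<in>states A. syn_saturated (nfa_lang A) (state_lang A q))"
proof -
  have "finite {tsder u (nfa_lang A) v | u v. True}"
    using assms by (intro regular_finite_tsder) (auto simp: regular_def)
  then show ?thesis
    unfolding subatomic_def using syn_saturated_if_bool_gen bool_gen_if_syn_saturated by blast
qed

lemma lder_syn_saturated_eq:
  "syn_saturated L K \<Longrightarrow> syn_eq L w w' \<Longrightarrow> lder w K = lder w' K"
  unfolding syn_saturated_def lder_def by (blast dest: syn_eq_append_right syn_eq_sym)

definition jsl_le :: "(nat \<Rightarrow> nat \<Rightarrow> nat) \<Rightarrow> nat \<Rightarrow> nat \<Rightarrow> bool" where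
  "jsl_le j x y \<longleftrightarrow> j x y = y"

lemma jsl_le_image_iff_subset:
  assumes "inj_on f \<K>" "K' \<in> \<K>" "K \<union> K' \<in> \<K>" "f (K \<union> K') = j (f K) (f K')"
  shows "jsl_le j (f K) (f K') \<longleftrightarrow> K \<subseteq> K'"
  using assms inj_on_eq_iff[OF assms(1,3,2)] by (auto simp: jsl_le_def)

lemma join_irr_subset: "join_irr S j b \<subseteq> S"
  by (auto simp: join_irr_def)

lemma join_irrD: "x \<in> join_irr S j b \<Longrightarrow> y \<in> S \<Longrightarrow> z \<in> S \<Longrightarrow> x = j y z \<Longrightarrow> x = y \<or> x = z"
  by (simp add: join_irr_def)

locale fin_jsl =
  fixes S :: "nat set" and j :: "nat \<Rightarrow> nat \<Rightarrow> nat" and b :: nat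
  assumes finite_jsl: "finite_jsl S j b"
begin

abbreviation le :: "nat \<Rightarrow> nat \<Rightarrow> bool" where
  "le \<equiv> jsl_le j"

lemma finite_S: "finite S"
  and join_in: "x \<in> S \<Longrightarrow> y \<in> S \<Longrightarrow> j x y \<in> S"
  and join_assoc: "x \<in> S \<Longrightarrow> y \<in> S \<Longrightarrow> z \<in> S \<Longrightarrow> j (j x y) z = j x (j y z)"
  and join_comm: "x \<in> S \<Longrightarrow> y \<in> S \<Longrightarrow> j x y = j y x"
  and join_idem: "x \<in> S \<Longrightarrow> j x x = x"
  and bot_join: "x \<in> S \<Longrightarrow> j b x = x"
  using finite_jsl unfolding finite_jsl_def by auto

lemma le_refl: "x \<in> S \<Longrightarrow> le x x"
  by (simp add: jsl_le_def join_idem)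

lemma le_trans: "x \<in> S \<Longrightarrow> y \<in> S \<Longrightarrow> z \<in> S \<Longrightarrow> le x y \<Longrightarrow> le y z \<Longrightarrow> le x z"
  unfolding jsl_le_def by (metis join_assoc)

lemma le_antisym: "x \<in> S \<Longrightarrow> y \<in> S \<Longrightarrow> le x y \<Longrightarrow> le y x \<Longrightarrow> x = y"
  unfolding jsl_le_def by (metis join_comm)

lemma join_le_iff:
  assumes "x \<in> S" "y \<in> S" "t \<in> S"
  shows "le (j x y) t \<longleftrightarrow> le x t \<and> le y t"
proof
  assume "le (j x y) t"
  then have "j x t = j (j x (j x y)) t" "j y t = j (j y (j x y)) t"
    using assms by (simp_all add: jsl_le_def join_assoc join_in)
  moreover have "j x (j x y) = j x y" "j y (j x y) = j x y"
    using assms by (simp_all add: join_assoc[symmetric] join_idem, metis join_assoc join_comm join_idem)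
  ultimately show "le x t \<and> le y t"
    using \<open>le (j x y) t\<close> by (simp add: jsl_le_def)
next
  assume "le x t \<and> le y t"
  then show "le (j x y) t"
    using assms by (simp add: jsl_le_def join_assoc)
qed

lemma bot_le: "x \<in> S \<Longrightarrow> le b x"
  by (simp add: jsl_le_def bot_join)

lemma endo_mono: "jsl_endo S j b g \<Longrightarrow> x \<in> S \<Longrightarrow> y \<in> S \<Longrightarrow> le x y \<Longrightarrow> le (g x) (g y)"
  unfolding jsl_endo_def jsl_le_def by metis

lemma card_down_less:
  assumes "x \<in> S" "y \<in> S" "le x y" "x \<noteq> y"
  shows "card {z \<in> S. le z x} < card {z \<in> S. le z y}"
proof (rule psubset_card_mono)
  show "finite {z \<in> S. le z y}"
    using finite_S by simp
  have "{z \<in> S. le z x} \<subseteq> {z \<in> S. le z y}"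
    using assms(1-3) le_trans by blast
  moreover have "y \<in> {z \<in> S. le z y} - {z \<in> S. le z x}"
    using assms le_antisym le_refl by auto
  ultimately show "{z \<in> S. le z x} \<subset> {z \<in> S. le z y}"
    by blast
qed

text \<open>Every element is the join of the join-irreducibles below it, so a join-preserving
  map is bounded by t as soon as it is on the join-irreducibles.\<close>
lemma endo_le_if_join_irr_le:
  assumes g: "jsl_endo S j b g"
  shows "s \<in> S \<Longrightarrow> t \<in> S \<Longrightarrow> \<forall>z\<in>join_irr S j b. le z s \<longrightarrow> le (g z) t \<Longrightarrow> le (g s) t"
proof (induction "card {x \<in> S. le x s}" arbitrary: s rule: less_induct)
  case less
  show ?case
  proof (cases "s = b \<or> s \<in> join_irr S j b")
    case True
    then show ?thesis
      using g less.prems le_refl bot_le by (auto simp: jsl_endo_def)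
  next
    case False
    then obtain y z where yz: "y \<in> S" "z \<in> S" "s = j y z" "y \<noteq> s" "z \<noteq> s"
      using less.prems(1) unfolding join_irr_def by fastforce
    have below: "le y s" "le z s"
      using join_le_iff[OF yz(1,2) less.prems(1)] le_refl[OF less.prems(1)] yz(3) by simp_all
    have "le (g x) t" if "x \<in> S" "le x s" "x \<noteq> s" for x
    proof (rule less.hyps[OF card_down_less[OF that(1) less.prems(1) that(2,3)] that(1) less.prems(2)])
      show "\<forall>z\<in>join_irr S j b. le z x \<longrightarrow> le (g z) t"
        using less.prems(3) join_irr_subset[of S j b] le_trans[OF _ that(1) less.prems(1) _ that(2)] by blast
    qed
    then have "le (g y) t" "le (g z) t"
      using yz below by auto
    moreover have "g s = j (g y) (g z)" "g y \<in> S" "g z \<in> S"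
      using g yz by (auto simp: jsl_endo_def)
    ultimately show ?thesis
      using join_le_iff less.prems(2) by simp
  qed
qed

lemma endo_le_iff_join_irr:
  assumes g: "jsl_endo S j b g" and s: "s \<in> S" and t: "t \<in> S"
  shows "le (g s) t \<longleftrightarrow> (\<forall>z\<in>join_irr S j b. le z s \<longrightarrow> le (g z) t)"
proof (intro iffI ballI impI)
  fix z
  assume "le (g s) t" "z \<in> join_irr S j b" "le z s"
  moreover from this have "z \<in> S"
    using join_irr_subset[of S j b] by blast
  ultimately show "le (g z) t"
    using g s t endo_mono[OF g _ s] le_trans[of "g z" "g s" t] by (simp add: jsl_endo_def)
qed (rule endo_le_if_join_irr_le[OF g s t])

end

definition join_irr_nfa ::
  "nat set \<Rightarrow> (nat \<Rightarrow> nat \<Rightarrow> nat) \<Rightarrow> nat \<Rightarrow> ('a list \<Rightarrow> nat \<Rightarrow> nat) \<Rightarrow> nat \<Rightarrow> nat \<Rightarrow> 'a nfa"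
where
  "join_irr_nfa S j b r s t =
     \<lparr>states = join_irr S j b,
      trans = (\<lambda>y a. {z \<in> join_irr S j b. jsl_le j z (r [a] y)}),
      init = {z \<in> join_irr S j b. jsl_le j z s},
      final = {z \<in> join_irr S j b. \<not> jsl_le j z t}\<rparr>"

lemma (in fin_jsl) wf_join_irr_nfa: "wf_nfa (join_irr_nfa S j b r s t)"
  using finite_S join_irr_subset[of S j b]
  by (auto simp: wf_nfa_def join_irr_nfa_def intro: finite_subset)

locale jsl_action = fin_jsl +
  fixes r :: "'a list \<Rightarrow> nat \<Rightarrow> nat"
  assumes endo: "jsl_endo S j b (r w)"
    and act_Nil: "x \<in> S \<Longrightarrow> r [] x = x"
    and act_append: "x \<in> S \<Longrightarrow> r (v @ w) x = r w (r v x)"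
begin

lemma act_in: "x \<in> S \<Longrightarrow> r w x \<in> S"
  using endo by (simp add: jsl_endo_def)

lemma state_lang_join_irr_nfa:
  assumes "y \<in> join_irr S j b" and t: "t \<in> S"
  shows "state_lang (join_irr_nfa S j b r s t) y = {w. \<not> le (r w y) t}"
proof (intro set_eqI)
  fix w
  show "w \<in> state_lang (join_irr_nfa S j b r s t) y \<longleftrightarrow> w \<in> {w. \<not> le (r w y) t}"
    using assms(1)
  proof (induction w arbitrary: y)
    case Nil
    then show ?case
      using act_Nil join_irr_subset[of S j b] by (auto simp: state_lang_def join_irr_nfa_def)
  next
    case (Cons a w)
    have y: "y \<in> S"
      using Cons.prems join_irr_subset[of S j b] by blast
    have "a # w \<in> state_lang (join_irr_nfa S j b r s t) y
        \<longleftrightarrow> (\<exists>z\<in>join_irr S j b. le z (r [a] y) \<and> \<not> le (r w z) t)"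
      using Cons.IH by (auto simp: state_lang_def join_irr_nfa_def)
    also have "\<dots> \<longleftrightarrow> \<not> le (r w (r [a] y)) t"
      using endo_le_iff_join_irr[OF endo act_in[OF y] t] by blast
    also have "r w (r [a] y) = r (a # w) y"
      using act_append[OF y, of "[a]" w] by simp
    finally show ?case
      by simp
  qed
qed

lemma nfa_lang_join_irr_nfa:
  assumes s: "s \<in> S" and t: "t \<in> S"
  shows "nfa_lang (join_irr_nfa S j b r s t) = {w. \<not> le (r w s) t}"
proof -
  have "w \<in> nfa_lang (join_irr_nfa S j b r s t)
      \<longleftrightarrow> (\<exists>z\<in>join_irr S j b. le z s \<and> \<not> le (r w z) t)" for w
    using state_lang_join_irr_nfa[OF _ t] by (auto simp: nfa_lang_def join_irr_nfa_def)
  then show ?thesis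
    using endo_le_iff_join_irr[OF endo s t] by blast
qed

lemma syn_saturated_state_lang_join_irr_nfa:
  assumes "y \<in> join_irr S j b" "t \<in> S" and r_syn: "\<And>w w'. syn_eq L w w' \<Longrightarrow> r w = r w'"
  shows "syn_saturated L (state_lang (join_irr_nfa S j b r s t) y)"
  using r_syn unfolding state_lang_join_irr_nfa[OF assms(1,2)] syn_saturated_def by auto

end

lemma subatomic_nfa_of_rep:
  fixes L :: "'a list set"
  assumes rep: "bool_rep L S j b \<rho>" and ext: "extends_canonical L S j b \<rho>"
  shows "\<exists>A :: 'a nfa. wf_nfa A \<and> nfa_lang A = L \<and> subatomic A
           \<and> card (states A) = card (join_irr S j b)"
proof -
  obtain f :: "'a list set \<Rightarrow> nat" where f_inj: "inj_on f (LQ L)" and f_in: "\<forall>K\<in>LQ L. f K \<in> S"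
    and f_Un: "\<forall>K\<in>LQ L. \<forall>K'\<in>LQ L. f (K \<union> K') = j (f K) (f K')"
    and f_lder: "\<forall>w. \<forall>K\<in>LQ L. f (lder w K) = \<rho> (syn_class L w) (f K)"
    using ext unfolding extends_canonical_def by blast
  define r where "r w = \<rho> (syn_class L w)" for w
  interpret jsl_action S j b r
    using rep unfolding bool_rep_def r_def by unfold_locales auto
  have "finite (LQ L)"
    using f_inj f_in finite_S by (metis finite_imageD finite_subset image_subsetI)
  then have K0: "rejecting_part L \<in> LQ L"
    by (rule rejecting_part_in_LQ)
  have le_rejecting_iff: "le (f K) (f (rejecting_part L)) \<longleftrightarrow> K \<subseteq> rejecting_part L"
    if "K \<in> LQ L" for K
    using jsl_le_image_iff_subset[OF f_inj K0 LQ_Un[OF that K0]] f_Un that K0 by simp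
  define A where "A = join_irr_nfa S j b r (f L) (f (rejecting_part L))"
  have "nfa_lang A = {w. \<not> le (f (lder w L)) (f (rejecting_part L))}"
    unfolding A_def using f_in f_lder self_in_LQ[of L] K0 by (simp add: nfa_lang_join_irr_nfa r_def)
  also have "\<dots> = {w. [] \<in> lder w L}"
    by (simp add: le_rejecting_iff[OF lder_in_LQ] Nil_in_LQ_iff[OF lder_in_LQ])
  also have "\<dots> = L"
    by (simp add: lder_def)
  finally have lang: "nfa_lang A = L" .
  have wf: "wf_nfa A"
    unfolding A_def by (rule wf_join_irr_nfa)
  have "subatomic A"
    unfolding subatomic_iff_syn_saturated[OF wf] lang
  proof
    fix y assume "y \<in> states A"
    then show "syn_saturated L (state_lang A y)"
      unfolding A_def using f_in K0
      by (intro syn_saturated_state_lang_join_irr_nfa) (auto simp: join_irr_nfa_def r_def syn_class_eq)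
  qed
  moreover have "card (states A) = card (join_irr S j b)"
    by (simp add: A_def join_irr_nfa_def)
  ultimately show ?thesis
    using wf lang by blast
qed

text \<open>Boolean representations are carried by sets of naturals, so a finite family of
  languages closed under union is transported to nat along an injective coding.\<close>
locale coded_family =
  fixes F :: "'b set set" and code :: "'b set \<Rightarrow> nat"
  assumes finite_F: "finite F" and inj_code: "inj_on code F"
    and empty_in_F: "{} \<in> F" and Un_in_F: "X \<in> F \<Longrightarrow> Y \<in> F \<Longrightarrow> X \<union> Y \<in> F"
begin

definition decode :: "nat \<Rightarrow> 'b set" where
  "decode = the_inv_into F code"

definition join :: "nat \<Rightarrow> nat \<Rightarrow> nat" where
  "join x y = code (decode x \<union> decode y)"

lemma decode_code [simp]: "X \<in> F \<Longrightarrow> decode (code X) = X"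
  unfolding decode_def using the_inv_into_f_f[OF inj_code] .

lemma join_code [simp]: "X \<in> F \<Longrightarrow> Y \<in> F \<Longrightarrow> join (code X) (code Y) = code (X \<union> Y)"
  by (simp add: join_def)

lemma Union_in_F: "finite H \<Longrightarrow> H \<subseteq> F \<Longrightarrow> \<Union>H \<in> F"
  by (induction H rule: finite_induct) (auto intro: empty_in_F Un_in_F)

lemma finite_jsl_code: "finite_jsl (code ` F) join (code {})"
  unfolding finite_jsl_def using finite_F empty_in_F Un_in_F
  by (auto simp: Un_ac)

lemma join_irr_code_Union:
  assumes "finite H" "H \<subseteq> F" "code (\<Union>H) \<in> join_irr (code ` F) join (code {})"
  shows "\<exists>X\<in>H. code (\<Union>H) = code X"
  using assms
proof (induction H rule: finite_induct)
  case empty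
  then show ?case
    by (simp add: join_irr_def)
next
  case (insert X H)
  then have "X \<in> F" "\<Union>H \<in> F"
    using Union_in_F by auto
  then have "code (\<Union>(insert X H)) = join (code X) (code (\<Union>H))"
    "code X \<in> code ` F" "code (\<Union>H) \<in> code ` F"
    by simp_all
  then have "code (\<Union>(insert X H)) = code X \<or> code (\<Union>(insert X H)) = code (\<Union>H)"
    using join_irrD[OF insert.prems(2)] by blast
  then show ?case
    using insert.IH insert.prems by auto
qed

lemma join_irr_code_subset:
  assumes "G \<subseteq> F" and spans: "\<forall>X\<in>F. \<exists>H\<subseteq>G. X = \<Union>H"
  shows "join_irr (code ` F) join (code {}) \<subseteq> code ` G"
proof
  fix x assume x: "x \<in> join_irr (code ` F) join (code {})"
  then obtain X where X: "X \<in> F" "x = code X"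
    using join_irr_subset by blast
  obtain H where H: "H \<subseteq> G" "X = \<Union>H"
    using bspec[OF spans X(1)] by blast
  moreover have "finite H"
    using H(1) assms(1) finite_F by (meson finite_subset)
  ultimately obtain Y where "Y \<in> H" "x = code Y"
    using join_irr_code_Union assms(1) x X(2) by blast
  then show "x \<in> code ` G"
    using H(1) by blast
qed

end

locale lder_closed_family = coded_family F code
  for F :: "'a list set set" and code +
  fixes L :: "'a list set"
  assumes lder_in_F: "X \<in> F \<Longrightarrow> lder w X \<in> F"
    and saturated: "X \<in> F \<Longrightarrow> syn_saturated L X"
begin

definition act :: "'a list set \<Rightarrow> nat \<Rightarrow> nat" where
  "act c x = code (lder (SOME w. syn_class L w = c) (decode x))"

lemma act_code: "X \<in> F \<Longrightarrow> act (syn_class L w) (code X) = code (lder w X)"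
proof -
  assume X: "X \<in> F"
  define w' where "w' = (SOME w'. syn_class L w' = syn_class L w)"
  have "syn_class L w' = syn_class L w"
    unfolding w'_def by (rule someI) simp
  then have "syn_eq L w' w"
    by (auto simp: syn_class_def syn_eq_def)
  then have "lder w' X = lder w X"
    using lder_syn_saturated_eq saturated X by blast
  then show ?thesis
    using X by (simp add: act_def flip: w'_def)
qed

lemma bool_rep_code: "bool_rep L (code ` F) join (code {}) act"
  unfolding bool_rep_def jsl_endo_def
proof (intro conjI allI ballI finite_jsl_code)
  fix w
  show "act (syn_class L w) (code {}) = code {}"
    using empty_in_F by (simp add: act_code lder_def)
  fix x assume "x \<in> code ` F"
  then obtain X where X: "X \<in> F" "x = code X"
    by blast
  show "act (syn_class L w) x \<in> code ` F"
    using X lder_in_F by (simp add: act_code)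
  show "act (syn_class L []) x = x"
    using X by (simp add: act_code lder_def)
  fix v
  show "act (syn_class L (v @ w)) x = act (syn_class L w) (act (syn_class L v) x)"
    using X lder_in_F by (simp add: act_code lder_def)
  fix y assume "y \<in> code ` F"
  then obtain Y where Y: "Y \<in> F" "y = code Y"
    by blast
  show "act (syn_class L w) (join x y) = join (act (syn_class L w) x) (act (syn_class L w) y)"
    using X Y lder_in_F Un_in_F by (simp add: act_code lder_Un)
qed

lemma extends_canonical_code:
  assumes "LQ L \<subseteq> F"
  shows "extends_canonical L (code ` F) join (code {}) act"
  unfolding extends_canonical_def
  using assms inj_on_subset[OF inj_code assms] by (intro exI[of _ code]) (auto simp: act_code subsetD)

end

definition state_lang_unions :: "'a nfa \<Rightarrow> 'a list set set" where
  "state_lang_unions A = {\<Union>(state_lang A ` Q) | Q. Q \<subseteq> states A}"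

lemma state_lang_unionsE:
  assumes "X \<in> state_lang_unions A"
  obtains Q where "Q \<subseteq> states A" "X = \<Union>(state_lang A ` Q)"
  using assms unfolding state_lang_unions_def by blast

lemma state_lang_in_state_lang_unions: "q \<in> states A \<Longrightarrow> state_lang A q \<in> state_lang_unions A"
  unfolding state_lang_unions_def by (intro CollectI exI[of _ "{q}"]) auto

lemma finite_state_lang_unions: "wf_nfa A \<Longrightarrow> finite (state_lang_unions A)"
proof -
  assume "wf_nfa A"
  moreover have "state_lang_unions A = (\<lambda>Q. \<Union>(state_lang A ` Q)) ` Pow (states A)"
    unfolding state_lang_unions_def by blast
  ultimately show ?thesis
    by (simp add: wf_nfa_def)
qed

lemma empty_in_state_lang_unions: "{} \<in> state_lang_unions A"
  unfolding state_lang_unions_def by blast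

lemma Un_in_state_lang_unions:
  assumes "X \<in> state_lang_unions A" "Y \<in> state_lang_unions A"
  shows "X \<union> Y \<in> state_lang_unions A"
proof -
  obtain Q where "Q \<subseteq> states A" "X = \<Union>(state_lang A ` Q)"
    using assms(1) by (rule state_lang_unionsE)
  moreover obtain Q' where "Q' \<subseteq> states A" "Y = \<Union>(state_lang A ` Q')"
    using assms(2) by (rule state_lang_unionsE)
  ultimately show ?thesis
    unfolding state_lang_unions_def by (intro CollectI exI[of _ "Q \<union> Q'"]) auto
qed

lemma Union_in_state_lang_unions:
  "finite D \<Longrightarrow> D \<subseteq> state_lang_unions A \<Longrightarrow> \<Union>D \<in> state_lang_unions A"
  by (induction D rule: finite_induct) (simp_all add: empty_in_state_lang_unions Un_in_state_lang_unions)

lemma lder_in_state_lang_unions: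
  assumes wf: "wf_nfa A" and X: "X \<in> state_lang_unions A"
  shows "lder w X \<in> state_lang_unions A"
proof -
  obtain Q where "Q \<subseteq> states A" "X = \<Union>(state_lang A ` Q)"
    using X by (rule state_lang_unionsE)
  then have "lder w X = \<Union>(state_lang A ` (\<Union>q\<in>Q. reach A q w))"
    "(\<Union>q\<in>Q. reach A q w) \<subseteq> states A"
    using reach_subset_states[OF wf] by (auto simp: lder_Union_state_lang)
  then show ?thesis
    unfolding state_lang_unions_def by blast
qed

lemma LQ_subset_state_lang_unions:
  assumes wf: "wf_nfa A"
  shows "LQ (nfa_lang A) \<subseteq> state_lang_unions A"
proof
  fix K assume "K \<in> LQ (nfa_lang A)"
  then obtain D where D: "K = \<Union>D" "finite D" "D \<subseteq> range (\<lambda>u. lder u (nfa_lang A))"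
    unfolding LQ_def by blast
  have "nfa_lang A \<in> state_lang_unions A"
    using wf unfolding state_lang_unions_def nfa_lang_def wf_nfa_def by blast
  then have "D \<subseteq> state_lang_unions A"
    using D(3) lder_in_state_lang_unions[OF wf] by blast
  then show "K \<in> state_lang_unions A"
    using D Union_in_state_lang_unions by blast
qed

lemma syn_saturated_if_in_state_lang_unions:
  assumes "wf_nfa A" "subatomic A" and X: "X \<in> state_lang_unions A"
  shows "syn_saturated (nfa_lang A) X"
proof -
  obtain Q where "Q \<subseteq> states A" "X = \<Union>(state_lang A ` Q)"
    using X by (rule state_lang_unionsE)
  then show ?thesis
    using assms(1,2) by (auto simp: subatomic_iff_syn_saturated intro!: syn_saturated_Union)
qed

lemma rep_of_subatomic_nfa:
  fixes A :: "'a nfa"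
  assumes wf: "wf_nfa A" and sub: "subatomic A"
  shows "\<exists>S j b \<rho>. bool_rep (nfa_lang A) S j b \<rho> \<and> extends_canonical (nfa_lang A) S j b \<rho>
           \<and> card (join_irr S j b) \<le> card (states A)"
proof -
  obtain code :: "'a list set \<Rightarrow> nat" where "inj_on code (state_lang_unions A)"
    using finite_imp_inj_to_nat_seg[OF finite_state_lang_unions[OF wf]] by blast
  then interpret lder_closed_family "state_lang_unions A" code "nfa_lang A"
    by unfold_locales (simp_all add: finite_state_lang_unions[OF wf] empty_in_state_lang_unions
        Un_in_state_lang_unions lder_in_state_lang_unions[OF wf]
        syn_saturated_if_in_state_lang_unions[OF wf sub])
  have "join_irr (code ` state_lang_unions A) join (code {}) \<subseteq> code ` state_lang A ` states A"
  proof (rule join_irr_code_subset)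
    show "state_lang A ` states A \<subseteq> state_lang_unions A"
      using state_lang_in_state_lang_unions by blast
    show "\<forall>X\<in>state_lang_unions A. \<exists>H\<subseteq>state_lang A ` states A. X = \<Union>H"
    proof
      fix X assume "X \<in> state_lang_unions A"
      then obtain Q where "Q \<subseteq> states A" "X = \<Union>(state_lang A ` Q)"
        by (rule state_lang_unionsE)
      then show "\<exists>H\<subseteq>state_lang A ` states A. X = \<Union>H"
        by blast
    qed
  qed
  moreover have "finite (states A)"
    using wf by (simp add: wf_nfa_def)
  ultimately have "card (join_irr (code ` state_lang_unions A) join (code {}))
      \<le> card (code ` state_lang A ` states A)"
    by (simp add: card_mono)
  also have "\<dots> \<le> card (state_lang A ` states A)"
    using \<open>finite (states A)\<close> by (simp add: card_image_le)
  also have "\<dots> \<le> card (states A)"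
    using \<open>finite (states A)\<close> by (rule card_image_le)
  finally show ?thesis
    using bool_rep_code extends_canonical_code[OF LQ_subset_state_lang_unions[OF wf]] by blast
qed

lemma Least_eq_if_mutually_bounded:
  fixes P Q :: "nat \<Rightarrow> bool"
  assumes PQ: "\<And>n. P n \<Longrightarrow> \<exists>m\<le>n. Q m" and QP: "\<And>n. Q n \<Longrightarrow> \<exists>m\<le>n. P m"
  shows "(LEAST n. P n) = (LEAST n. Q n)"
proof (cases "\<exists>n. P n")
  case True
  then have "P (LEAST n. P n)"
    by (rule LeastI_ex)
  then obtain m where m: "m \<le> (LEAST n. P n)" "Q m"
    using PQ by blast
  then have "Q (LEAST n. Q n)"
    by (intro LeastI)
  then obtain k where k: "k \<le> (LEAST n. Q n)" "P k"
    using QP by blast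
  have "(LEAST n. Q n) \<le> m" "(LEAST n. P n) \<le> k"
    using m(2) k(2) by (simp_all add: Least_le)
  then show ?thesis
    using m(1) k(1) by linarith
next
  case False
  then have "P = Q"
    using QP by auto
  then show ?thesis
    by simp
qed

theorem theorem4p13:
  fixes L :: "('a :: finite) list set"
  assumes "regular L"
  shows "nsyn L = (LEAST n. \<exists>A :: 'a nfa. wf_nfa A \<and> nfa_lang A = L \<and> subatomic A
                               \<and> card (states A) = n)"
  unfolding nsyn_def
proof (rule Least_eq_if_mutually_bounded)
  fix n
  assume "\<exists>S j b \<rho>. bool_rep L S j b \<rho> \<and> extends_canonical L S j b \<rho> \<and> card (join_irr S j b) = n"
  then show "\<exists>m\<le>n. \<exists>A :: 'a nfa. wf_nfa A \<and> nfa_lang A = L \<and> subatomic A \<and> card (states A) = m"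
    using subatomic_nfa_of_rep by blast
next
  fix n
  assume "\<exists>A :: 'a nfa. wf_nfa A \<and> nfa_lang A = L \<and> subatomic A \<and> card (states A) = n"
  then show "\<exists>m\<le>n. \<exists>S j b \<rho>. bool_rep L S j b \<rho> \<and> extends_canonical L S j b \<rho>
               \<and> card (join_irr S j b) = m"
    using rep_of_subatomic_nfa by blast
qed

end
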